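(* Let $k$ be a field, $(X,\leq)$ a locally finite preordered set and $C=IC(X)$. Then every simple right $C$-comodule is isomorphic to $S_x$ for some $x\in X$.
   Context: $(X,\leq)$ is a reflexive transitive relation with all intervals $[x,y]=\{z\mid x\leq z\leq y\}$ finite. $IC(X)$ has $k$-basis $\{e_{x,y}\mid x\leq y\}$, $\Delta(e_{x,y})=\sum_{x\leq z\leq y}e_{x,z}\otimes e_{z,y}$, $\varepsilon(e_{x,y})=\delta_{x,y}$. $x\sim y$ means $x\leq y$ and $y\leq x$. For $x\in X$ with $\sim$-class $\mathcal C$, $S_x=\sum_{y\in\mathcal C}k e_{x,y}$, which is a simple right $C$-subcomodule of $C$. *)

theory Defs
  imports Main "HOL.Vector_Spaces" "HOL-Library.Function_Algebras"
begin

(* Preorder X: the type 'x of class preorder, with relation \<le>.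
   Local finiteness is assumed explicitly in the theorem.

   Incidence coalgebra C = IC(X) over the field 'k: its elements are the finite
   linear combinations  \<Sum> c(x,y) e_{x,y}  (x \<le> y), represented as functions
   c :: 'x \<times> 'x \<Rightarrow> 'k with finite support contained in {(x,y). x \<le> y}.

   For a k-vector space M, an element of M \<otimes> C is uniquely  \<Sum> m_{a,b} \<otimes> e_{a,b};
   we represent it by its coefficient family  'x \<times> 'x \<Rightarrow> 'm  (finite support on
   pairs a \<le> b).  A right coaction \<rho> : M \<rightarrow> M \<otimes> C is thus a map
   rho :: 'm \<Rightarrow> ('x \<times> 'x \<Rightarrow> 'm). *)

definition IC :: "('x::preorder \<times> 'x \<Rightarrow> 'k::field) set" where
  "IC = {c. finite {p. c p \<noteq> 0} \<and> (\<forall>a b. c (a,b) \<noteq> 0 \<longrightarrow> a \<le> b)}"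

definition ic_scale :: "'k::field \<Rightarrow> ('x \<times> 'x \<Rightarrow> 'k) \<Rightarrow> ('x \<times> 'x \<Rightarrow> 'k)" where
  "ic_scale a c = (\<lambda>p. a * c p)"

text \<open>The comultiplication of C viewed as the right coaction of C on itself:
  Delta(e_{x,y}) = sum over x<=z<=y of e_{x,z} (x) e_{z,y}; the coefficient of
  e_{a,b} (second tensor factor) of Delta(c) is the element
  sum over u<=a of c(u,b) e_{u,a} (when a<=b).\<close>
definition ic_comul :: "('x::preorder \<times> 'x \<Rightarrow> 'k::field) \<Rightarrow> ('x \<times> 'x \<Rightarrow> ('x \<times> 'x \<Rightarrow> 'k))" where
  "ic_comul c = (\<lambda>(a,b). (\<lambda>(u,v). if v = a \<and> u \<le> a \<and> a \<le> b then c (u,b) else 0))"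

text \<open>S_x = span of e_{x,y}, y in the ~-class of x.\<close>
definition S_simple :: "'x::preorder \<Rightarrow> ('x \<times> 'x \<Rightarrow> 'k::field) set" where
  "S_simple x = {c. \<forall>u v. c (u,v) \<noteq> 0 \<longrightarrow> u = x \<and> x \<le> v \<and> v \<le> x}"

text \<open>A right C-comodule: a k-vector space V (a subspace of a k-vector space type 'm,
  scalar multiplication sc) with a linear coaction rho : V \<rightarrow> V \<otimes> C satisfying
  coassociativity (rho \<otimes> id) rho = (id \<otimes> Delta) rho and counitality
  (id \<otimes> epsilon) rho = id, written out in the basis e_{a,b} \<otimes> e_{c,d} of C \<otimes> C.\<close>
definition IC_comodule ::
  "('k::field \<Rightarrow> 'm::ab_group_add \<Rightarrow> 'm) \<Rightarrow> 'm set \<Rightarrow> ('m \<Rightarrow> ('x::preorder \<times> 'x \<Rightarrow> 'm)) \<Rightarrow> bool" where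
  "IC_comodule sc V rho \<longleftrightarrow>
     vector_space sc \<and> 0 \<in> V \<and> (\<forall>m\<in>V. \<forall>m'\<in>V. m + m' \<in> V) \<and> (\<forall>c. \<forall>m\<in>V. sc c m \<in> V) \<and>
     (\<forall>m\<in>V. finite {p. rho m p \<noteq> 0} \<and> (\<forall>a b. rho m (a,b) \<noteq> 0 \<longrightarrow> a \<le> b)
              \<and> (\<forall>p. rho m p \<in> V)) \<and>
     (\<forall>m\<in>V. \<forall>m'\<in>V. rho (m + m') = (\<lambda>p. rho m p + rho m' p)) \<and>
     (\<forall>m\<in>V. \<forall>c. rho (sc c m) = (\<lambda>p. sc c (rho m p))) \<and>
     (\<forall>m\<in>V. \<forall>a b c d. a \<le> b \<longrightarrow> c \<le> d \<longrightarrow>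
         rho (rho m (c,d)) (a,b) = (if b = c then rho m (a,d) else 0)) \<and>
     (\<forall>m\<in>V. (\<Sum>a\<in>{a. rho m (a,a) \<noteq> 0}. rho m (a,a)) = m)"

definition IC_subcomodule ::
  "('k::field \<Rightarrow> 'm::ab_group_add \<Rightarrow> 'm) \<Rightarrow> 'm set \<Rightarrow> ('m \<Rightarrow> ('x::preorder \<times> 'x \<Rightarrow> 'm)) \<Rightarrow> 'm set \<Rightarrow> bool" where
  "IC_subcomodule sc V rho N \<longleftrightarrow>
     N \<subseteq> V \<and> 0 \<in> N \<and> (\<forall>m\<in>N. \<forall>m'\<in>N. m + m' \<in> N) \<and> (\<forall>c. \<forall>m\<in>N. sc c m \<in> N) \<and> (\<forall>m\<in>N. \<forall>p. rho m p \<in> N)"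

definition IC_simple_comodule ::
  "('k::field \<Rightarrow> 'm::ab_group_add \<Rightarrow> 'm) \<Rightarrow> 'm set \<Rightarrow> ('m \<Rightarrow> ('x::preorder \<times> 'x \<Rightarrow> 'm)) \<Rightarrow> bool" where
  "IC_simple_comodule sc V rho \<longleftrightarrow>
     IC_comodule sc V rho \<and> V \<noteq> {0} \<and>
     (\<forall>N. IC_subcomodule sc V rho N \<longrightarrow> N = {0} \<or> N = V)"

text \<open>Isomorphism of comodules: a linear bijection commuting with the coactions,
  rho2 \<circ> f = (f \<otimes> id) \<circ> rho1.\<close>
definition IC_comodule_iso ::
  "('k::field \<Rightarrow> 'm::ab_group_add \<Rightarrow> 'm) \<Rightarrow> 'm set \<Rightarrow> ('m \<Rightarrow> ('x::preorder \<times> 'x \<Rightarrow> 'm)) \<Rightarrow>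
   ('k \<Rightarrow> 'n::ab_group_add \<Rightarrow> 'n) \<Rightarrow> 'n set \<Rightarrow> ('n \<Rightarrow> ('x \<times> 'x \<Rightarrow> 'n)) \<Rightarrow> ('m \<Rightarrow> 'n) \<Rightarrow> bool" where
  "IC_comodule_iso sc1 V1 rho1 sc2 V2 rho2 f \<longleftrightarrow>
     bij_betw f V1 V2 \<and>
     (\<forall>m\<in>V1. \<forall>m'\<in>V1. f (m + m') = f m + f m') \<and>
     (\<forall>m\<in>V1. \<forall>c. f (sc1 c m) = sc2 c (f m)) \<and>
     (\<forall>m\<in>V1. \<forall>p. rho2 (f m) p = f (rho1 m p))"

end

theory Submission
  imports Defs
begin

text \<open>Take \<open>m \<noteq> 0\<close> in a simple comodule \<open>V\<close>. By counitality some diagonal coefficient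
  \<open>\<rho>(m)(d,d)\<close> is nonzero; choose \<open>x\<close> minimal among the \<open>c\<close> with \<open>\<rho>(m)(c,d) \<noteq> 0\<close>.
  Coassociativity gives \<open>\<rho>(\<rho>(m)(y,d))(a,b) = [b = y] \<rho>(m)(a,d)\<close>, and minimality of \<open>x\<close>
  kills the coefficients \<open>\<rho>(m)(a,d)\<close> with \<open>a < x\<close>. Hence \<open>e\<^sub>x\<^sub>,\<^sub>y \<mapsto> \<rho>(m)(y,d)\<close>
  is a comodule map \<open>S\<^sub>x \<rightarrow> V\<close>; it is injective because \<open>\<rho>(m)(x,d) \<noteq> 0\<close>, and
  surjective because its image is a nonzero subcomodule of the simple comodule \<open>V\<close>.\<close>

lemma finite_preorder_has_minimal:
  fixes A :: "'x::preorder set"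
  assumes "finite A" "A \<noteq> {}"
  shows "\<exists>x\<in>A. \<forall>c\<in>A. c \<le> x \<longrightarrow> x \<le> c"
  using assms
proof (induction A rule: finite_ne_induct)
  case (singleton a)
  then show ?case by auto
next
  case (insert a F)
  then obtain x where x: "x \<in> F" "\<forall>c\<in>F. c \<le> x \<longrightarrow> x \<le> c" by blast
  show ?case
  proof (cases "a \<le> x \<and> \<not> x \<le> a")
    case True
    then have "\<forall>c\<in>insert a F. c \<le> a \<longrightarrow> a \<le> c"
      using x order_trans by blast
    then show ?thesis by blast
  next
    case False
    then show ?thesis using x by blast
  qed
qed

definition sim_class :: "'x::preorder \<Rightarrow> 'x set" where
  "sim_class x = {y. x \<le> y \<and> y \<le> x}"

lemma finite_sim_class:
  fixes x :: "'x::preorder"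
  assumes "\<forall>x y::'x. finite {z. x \<le> z \<and> z \<le> y}"
  shows "finite (sim_class x)"
  unfolding sim_class_def by (rule assms[rule_format])

lemma mem_S_simple_iff:
  "c \<in> S_simple x \<longleftrightarrow> (\<forall>u v. c (u,v) \<noteq> 0 \<longrightarrow> u = x \<and> v \<in> sim_class x)"
  unfolding S_simple_def sim_class_def by auto

lemma S_simple_zero: "0 \<in> S_simple x"
  by (simp add: mem_S_simple_iff)

lemma S_simple_add:
  assumes "c \<in> S_simple x" "c' \<in> S_simple x"
  shows "c + c' \<in> S_simple x"
proof -
  have "c (u,v) \<noteq> 0 \<or> c' (u,v) \<noteq> 0" if "(c + c') (u,v) \<noteq> 0" for u v
    using that by auto
  then show ?thesis using assms unfolding S_simple_def by blast
qed

lemma S_simple_diff: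
  assumes "c \<in> S_simple x" "c' \<in> S_simple x"
  shows "c - c' \<in> S_simple x"
proof -
  have "c (u,v) \<noteq> 0 \<or> c' (u,v) \<noteq> 0" if "(c - c') (u,v) \<noteq> 0" for u v
    using that by auto
  then show ?thesis using assms unfolding S_simple_def by blast
qed

lemma S_simple_scale: "c \<in> S_simple x \<Longrightarrow> ic_scale t c \<in> S_simple x"
  unfolding mem_S_simple_iff ic_scale_def by auto

lemma S_simple_ic_comul: "c \<in> S_simple x \<Longrightarrow> ic_comul c p \<in> S_simple x"
  unfolding mem_S_simple_iff ic_comul_def sim_class_def
  by (cases p) (auto split: if_splits intro: order_trans)

lemma S_simple_nontrivial: "S_simple x \<noteq> {0 :: 'x::preorder \<times> 'x \<Rightarrow> 'k::field}"
proof -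
  define e :: "'x \<times> 'x \<Rightarrow> 'k" where "e = (\<lambda>q. if q = (x,x) then 1 else 0)"
  have "e \<in> S_simple x" by (auto simp: e_def S_simple_def)
  moreover have "e \<noteq> 0" by (auto simp: e_def fun_eq_iff)
  ultimately show ?thesis by blast
qed

lemma IC_comodule_iso_inverse:
  assumes iso: "IC_comodule_iso sc1 V1 rho1 sc2 V2 rho2 g"
    and add_closed: "\<And>m m'. m \<in> V1 \<Longrightarrow> m' \<in> V1 \<Longrightarrow> m + m' \<in> V1"
    and scale_closed: "\<And>c m. m \<in> V1 \<Longrightarrow> sc1 c m \<in> V1"
    and rho_closed: "\<And>m p. m \<in> V1 \<Longrightarrow> rho1 m p \<in> V1"
  shows "IC_comodule_iso sc2 V2 rho2 sc1 V1 rho1 (the_inv_into V1 g)"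
proof -
  let ?f = "the_inv_into V1 g"
  have bij: "bij_betw g V1 V2"
    and g_add: "\<And>m m'. m \<in> V1 \<Longrightarrow> m' \<in> V1 \<Longrightarrow> g (m + m') = g m + g m'"
    and g_scale: "\<And>m c. m \<in> V1 \<Longrightarrow> g (sc1 c m) = sc2 c (g m)"
    and g_rho: "\<And>m p. m \<in> V1 \<Longrightarrow> rho2 (g m) p = g (rho1 m p)"
    using iso unfolding IC_comodule_iso_def by blast+
  have f_bij: "bij_betw ?f V2 V1"
    by (rule bij_betw_the_inv_into[OF bij])
  have f_in: "\<And>n. n \<in> V2 \<Longrightarrow> ?f n \<in> V1"
    using bij_betw_apply[OF f_bij] .
  have g_f: "\<And>n. n \<in> V2 \<Longrightarrow> g (?f n) = n"
    using f_the_inv_into_f_bij_betw[OF bij] .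
  have f_g: "\<And>m. m \<in> V1 \<Longrightarrow> ?f (g m) = m"
    using the_inv_into_f_f[OF bij_betw_imp_inj_on[OF bij]] .
  show ?thesis
    unfolding IC_comodule_iso_def
  proof (intro conjI ballI allI)
    fix n n' assume n: "n \<in> V2" "n' \<in> V2"
    have "?f (n + n') = ?f (g (?f n + ?f n'))"
      using n f_in g_add g_f by simp
    then show "?f (n + n') = ?f n + ?f n'"
      using n f_in add_closed f_g by simp
  next
    fix n c assume n: "n \<in> V2"
    have "?f (sc2 c n) = ?f (g (sc1 c (?f n)))"
      using n f_in g_scale g_f by simp
    then show "?f (sc2 c n) = sc1 c (?f n)"
      using n f_in scale_closed f_g by simp
  next
    fix n p assume n: "n \<in> V2"
    have "rho2 n p = g (rho1 (?f n) p)"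
      using g_rho[OF f_in[OF n], of p] unfolding g_f[OF n] .
    then show "rho1 (?f n) p = ?f (rho2 n p)"
      using n f_in rho_closed f_g by simp
  qed (rule f_bij)
qed

locale ic_comodule =
  fixes sc :: "'k::field \<Rightarrow> 'm::ab_group_add \<Rightarrow> 'm"
    and V :: "'m set"
    and rho :: "'m \<Rightarrow> ('x::preorder \<times> 'x \<Rightarrow> 'm)"
  assumes comodule: "IC_comodule sc V rho"
begin

sublocale vs: vector_space sc
  using comodule unfolding IC_comodule_def by blast

lemma zero_closed: "0 \<in> V"
  and add_closed: "m \<in> V \<Longrightarrow> m' \<in> V \<Longrightarrow> m + m' \<in> V"
  and scale_closed: "m \<in> V \<Longrightarrow> sc c m \<in> V"
  and finite_rho_support: "m \<in> V \<Longrightarrow> finite {p. rho m p \<noteq> 0}"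
  and rho_nonzero_le: "m \<in> V \<Longrightarrow> rho m (a,b) \<noteq> 0 \<Longrightarrow> a \<le> b"
  and rho_add: "m \<in> V \<Longrightarrow> m' \<in> V \<Longrightarrow> rho (m + m') = (\<lambda>p. rho m p + rho m' p)"
  and rho_scale: "m \<in> V \<Longrightarrow> rho (sc c m) = (\<lambda>p. sc c (rho m p))"
  and coassoc: "m \<in> V \<Longrightarrow> a \<le> b \<Longrightarrow> y \<le> d \<Longrightarrow>
      rho (rho m (y,d)) (a,b) = (if b = y then rho m (a,d) else 0)"
  and counit: "m \<in> V \<Longrightarrow> (\<Sum>a\<in>{a. rho m (a,a) \<noteq> 0}. rho m (a,a)) = m"
  using comodule unfolding IC_comodule_def by simp_all

lemma rho_closed: "m \<in> V \<Longrightarrow> rho m p \<in> V"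
  using comodule unfolding IC_comodule_def by (cases p) simp

lemma rho_zero: "rho 0 = (\<lambda>p. 0)"
proof
  fix p
  have "rho 0 p = rho 0 p + rho 0 p"
    using fun_cong[OF rho_add[OF zero_closed zero_closed]] by simp
  then show "rho 0 p = 0" by simp
qed

lemma sum_closed_rho_sum:
  assumes "\<And>y. y \<in> F \<Longrightarrow> h y \<in> V"
  shows "sum h F \<in> V \<and> rho (sum h F) = (\<lambda>p. \<Sum>y\<in>F. rho (h y) p)"
  using assms
proof (induction F rule: infinite_finite_induct)
  case (insert a F)
  then show ?case by (simp add: add_closed rho_add)
qed (simp_all add: zero_closed rho_zero)

lemma rho_rho_column:
  assumes "m \<in> V" "y \<le> d"
  shows "rho (rho m (y,d)) (a,b) = (if a \<le> b \<and> b = y then rho m (a,d) else 0)"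
proof (cases "a \<le> b")
  case True
  then show ?thesis using assms coassoc by simp
next
  case False
  then show ?thesis using rho_nonzero_le[OF rho_closed[OF assms(1)]] by auto
qed

lemma exists_nonzero_diagonal:
  assumes "V \<noteq> {0}"
  obtains m d where "m \<in> V" "rho m (d,d) \<noteq> 0"
proof -
  obtain m where m: "m \<in> V" "m \<noteq> 0" using assms zero_closed by blast
  have "{a. rho m (a,a) \<noteq> 0} \<noteq> {}"
  proof
    assume "{a. rho m (a,a) \<noteq> 0} = {}"
    then have "m = 0" using counit[OF m(1)] by simp
    with m(2) show False ..
  qed
  then show ?thesis using that m(1) by blast
qed

lemma exists_minimal_in_column:
  assumes "m \<in> V" "rho m (d,d) \<noteq> 0"
  obtains x where "rho m (x,d) \<noteq> 0" "\<And>c. rho m (c,d) \<noteq> 0 \<Longrightarrow> c \<le> x \<Longrightarrow> x \<le> c"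
proof -
  have "{c. rho m (c,d) \<noteq> 0} \<subseteq> fst ` {p. rho m p \<noteq> 0}" by force
  then have "finite {c. rho m (c,d) \<noteq> 0}"
    using finite_rho_support[OF assms(1)] finite_subset by blast
  then show ?thesis
    using finite_preorder_has_minimal[of "{c. rho m (c,d) \<noteq> 0}"] assms(2) that by blast
qed

end

subsection \<open>The comodule map \<open>S\<^sub>x \<rightarrow> V\<close>\<close>

definition column_map ::
  "('k::field \<Rightarrow> 'm::ab_group_add \<Rightarrow> 'm) \<Rightarrow> ('m \<Rightarrow> ('x::preorder \<times> 'x \<Rightarrow> 'm)) \<Rightarrow> 'm \<Rightarrow> 'x \<Rightarrow> 'x \<Rightarrow>
   ('x \<times> 'x \<Rightarrow> 'k) \<Rightarrow> 'm" where
  "column_map sc rho m d x c = (\<Sum>y\<in>sim_class x. sc (c (x,y)) (rho m (y,d)))"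

context ic_comodule
begin

context
  fixes m :: 'm and d x :: 'x
  assumes m_in: "m \<in> V"
    and x_in_column: "rho m (x,d) \<noteq> 0"
    and x_minimal: "\<And>c. rho m (c,d) \<noteq> 0 \<Longrightarrow> c \<le> x \<Longrightarrow> x \<le> c"
    and finite_class: "finite (sim_class x)"
begin

abbreviation g :: "('x \<times> 'x \<Rightarrow> 'k) \<Rightarrow> 'm" where
  "g \<equiv> column_map sc rho m d x"

lemma column_map_closed: "g c \<in> V"
proof -
  have "sc (c (x,y)) (rho m (y,d)) \<in> V" for y
    by (rule scale_closed[OF rho_closed[OF m_in]])
  then show ?thesis
    unfolding column_map_def
    using sum_closed_rho_sum[of "sim_class x" "\<lambda>y. sc (c (x,y)) (rho m (y,d))"] by blast
qed

lemma column_map_add: "g (c + c') = g c + g c'"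
  unfolding column_map_def by (simp add: vs.scale_left_distrib sum.distrib)

lemma column_map_diff: "g (c - c') = g c - g c'"
  unfolding column_map_def by (simp add: vs.scale_left_diff_distrib sum_subtractf)

lemma column_map_scale: "g (ic_scale t c) = sc t (g c)"
  unfolding column_map_def ic_scale_def by (simp add: vs.scale_sum_right)

lemma column_map_zero: "g 0 = 0"
  unfolding column_map_def by simp

lemma rho_column_map:
  assumes "c \<in> S_simple x"
  shows "rho (g c) (a,b) = (if a \<le> b \<and> b \<in> sim_class x then sc (c (x,b)) (rho m (a,d)) else 0)"
proof -
  have x_le_d: "x \<le> d" using x_in_column m_in rho_nonzero_le by blast
  have "rho (g c) (a,b) = (\<Sum>y\<in>sim_class x. rho (sc (c (x,y)) (rho m (y,d))) (a,b))"
    unfolding column_map_def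
    using sum_closed_rho_sum[of "sim_class x" "\<lambda>y. sc (c (x,y)) (rho m (y,d))"]
      scale_closed[OF rho_closed[OF m_in]] by simp
  also have "\<dots> = (\<Sum>y\<in>sim_class x. if b = y then (if a \<le> b then sc (c (x,y)) (rho m (a,d)) else 0) else 0)"
  proof (rule sum.cong)
    fix y assume "y \<in> sim_class x"
    then have "y \<le> d" using x_le_d order_trans unfolding sim_class_def by blast
    then show "rho (sc (c (x,y)) (rho m (y,d))) (a,b) =
        (if b = y then (if a \<le> b then sc (c (x,y)) (rho m (a,d)) else 0) else 0)"
      by (simp add: rho_scale[OF rho_closed[OF m_in]] rho_rho_column[OF m_in])
  qed simp
  also have "\<dots> = (if a \<le> b \<and> b \<in> sim_class x then sc (c (x,b)) (rho m (a,d)) else 0)"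
    using finite_class by (auto simp: sum.delta)
  finally show ?thesis .
qed

lemma column_map_ic_comul:
  "g (ic_comul c (a,b)) = (if a \<in> sim_class x \<and> a \<le> b then sc (c (x,b)) (rho m (a,d)) else 0)"
proof -
  have "g (ic_comul c (a,b)) =
      (\<Sum>y\<in>sim_class x. if y = a then (if x \<le> a \<and> a \<le> b then sc (c (x,b)) (rho m (y,d)) else 0) else 0)"
    unfolding column_map_def ic_comul_def by (rule sum.cong) auto
  also have "\<dots> = (if a \<in> sim_class x \<and> a \<le> b then sc (c (x,b)) (rho m (a,d)) else 0)"
    using finite_class by (auto simp: sum.delta' sim_class_def)
  finally show ?thesis .
qed

text \<open>Minimality of \<open>x\<close> is used exactly here: for \<open>a \<le> x\<close> outside the class of \<open>x\<close>,
  the coefficient \<open>\<rho>(m)(a,d)\<close> vanishes.\<close>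

lemma rho_column_map_eq:
  assumes c: "c \<in> S_simple x"
  shows "rho (g c) p = g (ic_comul c p)"
proof -
  obtain a b where p: "p = (a,b)" by (cases p)
  have vanish: "rho m (a,d) = 0" if "a \<le> x" "a \<notin> sim_class x"
    using that x_minimal unfolding sim_class_def by blast
  have "b \<in> sim_class x \<Longrightarrow> a \<le> b \<Longrightarrow> a \<le> x"
    unfolding sim_class_def using order_trans by blast
  moreover have "c (x,b) = 0" if "b \<notin> sim_class x"
    using c that unfolding mem_S_simple_iff by blast
  ultimately show ?thesis
    unfolding p rho_column_map[OF c] column_map_ic_comul using vanish by auto
qed

lemma inj_on_column_map: "inj_on g (S_simple x)"
proof (rule inj_onI)
  have kernel: "c = 0" if c: "c \<in> S_simple x" and gc: "g c = 0" for c
  proof (rule ccontr)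
    assume "c \<noteq> 0"
    then obtain u w where uw: "c (u,w) \<noteq> 0" by (auto simp: fun_eq_iff)
    then have "u = x" "w \<in> sim_class x" using c by (auto simp: mem_S_simple_iff)
    then have "sc (c (x,w)) (rho m (x,d)) = 0"
      using rho_column_map[OF c, of x w] gc rho_zero by (simp add: sim_class_def)
    then show False using uw \<open>u = x\<close> x_in_column by simp
  qed
  fix c c' assume "c \<in> S_simple x" "c' \<in> S_simple x" "g c = g c'"
  then have "c - c' = 0" using kernel[OF S_simple_diff] column_map_diff by simp
  then show "c = c'" by simp
qed

lemma column_map_image_subcomodule: "IC_subcomodule sc V rho (g ` S_simple x)"
  unfolding IC_subcomodule_def
proof (intro conjI ballI allI)
  show "g ` S_simple x \<subseteq> V" using column_map_closed by blast
  show "0 \<in> g ` S_simple x" using column_map_zero S_simple_zero by force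
next
  fix n n' assume "n \<in> g ` S_simple x" "n' \<in> g ` S_simple x"
  then obtain c c' where c: "c \<in> S_simple x" "c' \<in> S_simple x" and "n = g c" "n' = g c'"
    by blast
  then have "n + n' = g (c + c')" by (simp add: column_map_add)
  then show "n + n' \<in> g ` S_simple x" using S_simple_add[OF c] by (rule image_eqI)
next
  fix t n assume "n \<in> g ` S_simple x"
  then obtain c where c: "c \<in> S_simple x" and "n = g c" by blast
  then have "sc t n = g (ic_scale t c)" by (simp add: column_map_scale)
  then show "sc t n \<in> g ` S_simple x" using S_simple_scale[OF c] by (rule image_eqI)
next
  fix n p assume "n \<in> g ` S_simple x"
  then obtain c where c: "c \<in> S_simple x" and "n = g c" by blast
  then have "rho n p = g (ic_comul c p)" by (simp add: rho_column_map_eq)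
  then show "rho n p \<in> g ` S_simple x" using S_simple_ic_comul[OF c] by (rule image_eqI)
qed

lemma column_map_image_nontrivial: "g ` S_simple x \<noteq> {0}"
proof -
  obtain c :: "'x \<times> 'x \<Rightarrow> 'k" where c: "c \<in> S_simple x" "c \<noteq> 0"
    using S_simple_nontrivial S_simple_zero by blast
  have "g c \<noteq> g 0"
    using c inj_on_column_map S_simple_zero unfolding inj_on_def by blast
  then have "g c \<noteq> 0" by (simp add: column_map_zero)
  then show ?thesis using c(1) by blast
qed

lemma column_map_iso_onto_image:
  "IC_comodule_iso ic_scale (S_simple x) ic_comul sc (g ` S_simple x) rho g"
  unfolding IC_comodule_iso_def
  using inj_on_column_map column_map_add column_map_scale rho_column_map_eq
  by (simp add: bij_betw_def)

end

end

theorem mainTheorem5: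
  fixes sc :: "'k::field \<Rightarrow> 'm::ab_group_add \<Rightarrow> 'm"
    and V :: "'m set"
    and rho :: "'m \<Rightarrow> ('x::preorder \<times> 'x \<Rightarrow> 'm)"
  assumes locfin: "\<forall>x y::'x. finite {z. x \<le> z \<and> z \<le> y}"
    and simple: "IC_simple_comodule sc V rho"
  shows "\<exists>x::'x. \<exists>f. IC_comodule_iso sc V rho ic_scale (S_simple x) ic_comul f"
proof -
  interpret ic_comodule sc V rho
    using simple by unfold_locales (simp add: IC_simple_comodule_def)
  obtain m d where m: "m \<in> V" "rho m (d,d) \<noteq> 0"
    using simple exists_nonzero_diagonal unfolding IC_simple_comodule_def by blast
  obtain x where x: "rho m (x,d) \<noteq> 0" "\<And>c. rho m (c,d) \<noteq> 0 \<Longrightarrow> c \<le> x \<Longrightarrow> x \<le> c"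
    using exists_minimal_in_column[OF m] by blast
  note col = m(1) x finite_sim_class[OF locfin]
  let ?g = "column_map sc rho m d x"
  have "?g ` S_simple x = V"
    using simple column_map_image_subcomodule[OF col] column_map_image_nontrivial[OF col]
    unfolding IC_simple_comodule_def by blast
  then have "IC_comodule_iso ic_scale (S_simple x) ic_comul sc V rho ?g"
    using column_map_iso_onto_image[OF col] by simp
  then have "IC_comodule_iso sc V rho ic_scale (S_simple x) ic_comul (the_inv_into (S_simple x) ?g)"
    by (rule IC_comodule_iso_inverse) (auto intro: S_simple_add S_simple_scale S_simple_ic_comul)
  then show ?thesis by blast
qed

end
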